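(* Let $\hat{\mathbf Q}=\tilde{\mathbf Q}_{st}+\tilde{\mathbf Q}_{\mathcal I}\varepsilon$ be an $n\times n$ dual quaternion Hermitian matrix and $\epsilon>0$. Then Algorithm 1 applied to $\hat{\mathbf Q}$ with accuracy $\epsilon$ terminates after $T$ iterations, where $T$ is bounded by a fixed positive integer, and the final iterate satisfies $r^{(T)}<\epsilon$. Moreover, if $\mu_1\ge\mu_2\ge\cdots\ge\mu_n$ are the eigenvalues of $\tilde{\mathbf Q}_{st}$ and $d_1\ge d_2\ge\cdots\ge d_n$ are the diagonal entries of $\tilde{\mathbf Q}^{(T)}_{st}$ arranged in nonincreasing order, then $$\max_{1\le i\le n}|\mu_i-d_i|<\sqrt{n(n-1)}\,\epsilon .$$
   Context: Quaternions, dual quaternions $\hat q=q_{st}+q_{\mathcal I}\varepsilon$ ($\varepsilon$ commuting with quaternions, $\varepsilon^2=0$, product $(p_{st}+p_{\mathcal I}\varepsilon)(q_{st}+q_{\mathcal I}\varepsilon)=p_{st}q_{st}+(p_{st}q_{\mathcal I}+p_{\mathcal I}q_{st})\varepsilon$), conjugate transposes, Hermitian and unitary matrices are as usual; a quaternion Hermitian matrix has real eigenvalues and real diagonal. For a dual quaternion matrix $\hat{\mathbf Q}^{(t)}$ write $\hat{\mathbf Q}^{(t)}=\tilde{\mathbf Q}^{(t)}_{st}+\tilde{\mathbf Q}^{(t)}_{\mathcal I}\varepsilon$. Givens matrix: for an $n\times n$ dual quaternion Hermitian $\hat{\mathbf Q}$ and $k<l$ with $\tilde c=(\tilde{\mathbf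 Q}_{st})_{kl}\ne0$, put $a=(\tilde{\mathbf Q}_{st})_{kk}$, $b=(\tilde{\mathbf Q}_{st})_{ll}$, let $\lambda_1,\lambda_2$ be the roots of $(a-x)(b-x)=|\tilde c|^2$, $\rho_i=((a-\lambda_i)^2+|\tilde c|^2)^{1/2}$, $\tilde{\mathbf U}=\begin{bmatrix}-\tilde c/\rho_1&-\tilde c/\rho_2\\ (a-\lambda_1)/\rho_1&(a-\lambda_2)/\rho_2\end{bmatrix}$; with $\tilde{\mathbf B}$ the $\{k,l\}$ principal $2\times2$ submatrix of $\tilde{\mathbf Q}_{\mathcal I}$, write $\tilde{\mathbf U}^\ast\tilde{\mathbf B}\tilde{\mathbf U}=\begin{bmatrix}x&\tilde z\\ \tilde z^\ast&y\end{bmatrix}$ and $\hat{\mathbf V}=\begin{bmatrix}1&\frac{\tilde z}{\lambda_2-\lambda_1}\varepsilon\\ \frac{\tilde z^\ast}{\lambda_1-\lambda_2}\varepsilon&1\end{bmatrix}$. $J_{\hat{\mathbf Q}}(k,l)$ is the $n\times n$ identity with its $\{k,l\}$ rows/columns block replaced by $\tilde{\mathbf U}\hat{\mathbf V}$. Algorithm 1 (accuracy $\epsilon>0$): set $\hat{\mathbf Q}^{(0)}=\hat{\mathbf Q}$. At iteration $t=0,1,2,\dots$ compute $r^{(t)}=\max_{i<j}|(\tilde{\mathbf Q}^{(t)}_{st})_{ij}|$; if $r^{(t)}<\epsilon$ stop; otherwise choose $(k,l)$, $k<l$, attaining this maximum and set $\hat{\mathbf Q}^{(t+1)}=J_{\hat{\mathbf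 Q}^{(t)}}(k,l)^\ast\hat{\mathbf Q}^{(t)}J_{\hat{\mathbf Q}^{(t)}}(k,l)$. *)

theory Defs
  imports Complex_Main "HOL-Library.Multiset"
begin

datatype quat = Quat (qre: real) (qi: real) (qj: real) (qk: real)

lemma quat_eqI: "qre a = qre b \<Longrightarrow> qi a = qi b \<Longrightarrow> qj a = qj b \<Longrightarrow> qk a = qk b \<Longrightarrow> a = b"
  by (cases a; cases b) simp

instantiation quat :: ring_1
begin
definition "0 = Quat 0 0 0 0"
definition "1 = Quat 1 0 0 0"
definition "a + b = Quat (qre a + qre b) (qi a + qi b) (qj a + qj b) (qk a + qk b)"
definition "a - b = Quat (qre a - qre b) (qi a - qi b) (qj a - qj b) (qk a - qk b)"
definition "- a = Quat (- qre a) (- qi a) (- qj a) (- qk a)"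
definition "a * b = Quat
   (qre a * qre b - qi a * qi b - qj a * qj b - qk a * qk b)
   (qre a * qi b + qi a * qre b + qj a * qk b - qk a * qj b)
   (qre a * qj b - qi a * qk b + qj a * qre b + qk a * qi b)
   (qre a * qk b + qi a * qj b - qj a * qi b + qk a * qre b)"
instance
  by standard (auto intro!: quat_eqI simp: zero_quat_def one_quat_def plus_quat_def
      minus_quat_def uminus_quat_def times_quat_def algebra_simps)
end

definition qreal :: "real \<Rightarrow> quat" where "qreal r = Quat r 0 0 0"
definition qscale :: "real \<Rightarrow> quat \<Rightarrow> quat" where
  "qscale r q = Quat (r * qre q) (r * qi q) (r * qj q) (r * qk q)"
definition qcnj :: "quat \<Rightarrow> quat" where
  "qcnj q = Quat (qre q) (- qi q) (- qj q) (- qk q)"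
definition qnorm :: "quat \<Rightarrow> real" where
  "qnorm q = sqrt ((qre q)\<^sup>2 + (qi q)\<^sup>2 + (qj q)\<^sup>2 + (qk q)\<^sup>2)"

section \<open>Quaternion matrices (entries indexed by 0..<n)\<close>

type_synonym qmat = "nat \<Rightarrow> nat \<Rightarrow> quat"

definition qmult :: "nat \<Rightarrow> qmat \<Rightarrow> qmat \<Rightarrow> qmat" where
  "qmult n A B = (\<lambda>i j. \<Sum>m<n. A i m * B m j)"

definition qadj :: "qmat \<Rightarrow> qmat" where
  "qadj A = (\<lambda>i j. qcnj (A j i))"

definition qident :: qmat where
  "qident = (\<lambda>i j. if i = j then 1 else 0)"

definition qhermitian :: "nat \<Rightarrow> qmat \<Rightarrow> bool" where
  "qhermitian n A \<longleftrightarrow> (\<forall>i<n. \<forall>j<n. A j i = qcnj (A i j))"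

definition qunitary :: "nat \<Rightarrow> qmat \<Rightarrow> bool" where
  "qunitary n U \<longleftrightarrow> (\<forall>i<n. \<forall>j<n. qmult n (qadj U) U i j = qident i j \<and> qmult n U (qadj U) i j = qident i j)"

definition qeigenvalue_list :: "nat \<Rightarrow> qmat \<Rightarrow> (nat \<Rightarrow> real) \<Rightarrow> bool" where
  "qeigenvalue_list n A mu \<longleftrightarrow>
     (\<exists>U. qunitary n U \<and>
        (\<forall>i<n. \<forall>j<n. qmult n (qadj U) (qmult n A U) i j = (if i = j then qreal (mu i) else 0)))"

definition nonincreasing_on :: "nat \<Rightarrow> (nat \<Rightarrow> real) \<Rightarrow> bool" where
  "nonincreasing_on n f \<longleftrightarrow> (\<forall>i j. i \<le> j \<and> j < n \<longrightarrow> f j \<le> f i)"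

section \<open>Dual quaternion matrices: pairs (standard part, infinitesimal part)\<close>

type_synonym dqmat = "qmat \<times> qmat"

definition dmult :: "nat \<Rightarrow> dqmat \<Rightarrow> dqmat \<Rightarrow> dqmat" where
  "dmult n A B = (qmult n (fst A) (fst B),
                  \<lambda>i j. qmult n (fst A) (snd B) i j + qmult n (snd A) (fst B) i j)"

definition dadj :: "dqmat \<Rightarrow> dqmat" where
  "dadj A = (qadj (fst A), qadj (snd A))"

definition dhermitian :: "nat \<Rightarrow> dqmat \<Rightarrow> bool" where
  "dhermitian n A \<longleftrightarrow> qhermitian n (fst A) \<and> qhermitian n (snd A)"

text \<open>\<open>lam1, lam2\<close> are the two roots of \<open>(a-x)(b-x) = |c|^2\<close> (in some order).\<close>
definition givens_U :: "dqmat \<Rightarrow> nat \<Rightarrow> nat \<Rightarrow> real \<Rightarrow> real \<Rightarrow> qmat" where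
  "givens_U Q k l lam1 lam2 =
    (let c = fst Q k l; a = qre (fst Q k k);
         rho1 = sqrt ((a - lam1)\<^sup>2 + (qnorm c)\<^sup>2);
         rho2 = sqrt ((a - lam2)\<^sup>2 + (qnorm c)\<^sup>2)
     in (\<lambda>i j. if i = 0 \<and> j = 0 then qscale (- 1 / rho1) c
              else if i = 0 \<and> j = 1 then qscale (- 1 / rho2) c
              else if i = 1 \<and> j = 0 then qreal ((a - lam1) / rho1)
              else if i = 1 \<and> j = 1 then qreal ((a - lam2) / rho2)
              else 0))"

definition givens_W :: "dqmat \<Rightarrow> nat \<Rightarrow> nat \<Rightarrow> real \<Rightarrow> real \<Rightarrow> dqmat" where
  "givens_W Q k l lam1 lam2 =
    (let U = givens_U Q k l lam1 lam2;
         idx = (\<lambda>i::nat. if i = 0 then k else l);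
         B = (\<lambda>i j. if i < 2 \<and> j < 2 then snd Q (idx i) (idx j) else 0);
         z = qmult 2 (qadj U) (qmult 2 B U) 0 1;
         VI = (\<lambda>i j. if i = 0 \<and> j = 1 then qscale (1 / (lam2 - lam1)) z
                   else if i = 1 \<and> j = 0 then qscale (1 / (lam1 - lam2)) (qcnj z)
                   else 0);
         Vst = (\<lambda>i j. if i < 2 \<and> j < 2 \<and> i = j then 1 else 0)
     in dmult 2 (U, \<lambda>i j. 0) (Vst, VI))"

definition givens :: "dqmat \<Rightarrow> nat \<Rightarrow> nat \<Rightarrow> real \<Rightarrow> real \<Rightarrow> dqmat" where
  "givens Q k l lam1 lam2 =
    (let W = givens_W Q k l lam1 lam2;
         pos = (\<lambda>i::nat. if i = k then 0::nat else 1);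
         inb = (\<lambda>i. i = k \<or> i = l)
     in (\<lambda>i j. if inb i \<and> inb j then fst W (pos i) (pos j) else qident i j,
         \<lambda>i j. if inb i \<and> inb j then snd W (pos i) (pos j) else 0))"

text \<open>\<open>r^{(t)} = max_{i<j} |(Q_st)_{ij}|\<close> (0 if there are no off-diagonal entries).\<close>
definition off_max :: "nat \<Rightarrow> dqmat \<Rightarrow> real" where
  "off_max n Q = Max (insert 0 {qnorm (fst Q i j) | i j. i < j \<and> j < n})"

definition jacobi_step :: "nat \<Rightarrow> dqmat \<Rightarrow> dqmat \<Rightarrow> bool" where
  "jacobi_step n Q Q' \<longleftrightarrow>
    (\<exists>k l lam1 lam2. k < l \<and> l < n \<and> qnorm (fst Q k l) = off_max n Q \<and>
       lam1 \<noteq> lam2 \<and>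
       (qre (fst Q k k) - lam1) * (qre (fst Q l l) - lam1) = (qnorm (fst Q k l))\<^sup>2 \<and>
       (qre (fst Q k k) - lam2) * (qre (fst Q l l) - lam2) = (qnorm (fst Q k l))\<^sup>2 \<and>
       Q' = dmult n (dadj (givens Q k l lam1 lam2)) (dmult n Q (givens Q k l lam1 lam2)))"

definition algorithm1_run :: "nat \<Rightarrow> real \<Rightarrow> dqmat \<Rightarrow> (nat \<Rightarrow> dqmat) \<Rightarrow> bool" where
  "algorithm1_run n eps Q Qs \<longleftrightarrow>
     Qs 0 = Q \<and> (\<forall>t. off_max n (Qs t) \<ge> eps \<longrightarrow> jacobi_step n (Qs t) (Qs (Suc t)))"

end

theory Submission
  imports Defs "HOL-Combinatorics.List_Permutation"
begin

text \<open>Only standard parts matter: the infinitesimal factor \<open>V\<close> of the Givens matrix has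
  standard part \<open>I\<close>. A Jacobi step is therefore the unitary similarity of the standard part by
  the embedded \<open>2 \<times> 2\<close> block \<open>U\<close>, which diagonalizes the \<open>{k, l}\<close> principal block. The
  squared Frobenius norm is unitarily invariant, so the squared off-diagonal norm drops by
  exactly \<open>2 r\<^sup>2 \<ge> 2 \<epsilon>\<^sup>2\<close> per step (\<open>r\<close> the modulus of the pivot), which bounds the number
  of steps. On termination every off-diagonal entry is below \<open>\<epsilon>\<close>, so
  \<open>off\<^sup>2 < n (n - 1) \<epsilon>\<^sup>2\<close>. Writing the final standard part as \<open>V\<^sup>* diag(\<mu>) V\<close>, its
  diagonal is \<open>P \<mu>\<close> with \<open>P\<close> doubly stochastic, and this majorization gives
  \<open>\<Sum> (\<mu>\<^sub>i - d\<^sub>i)\<^sup>2 \<le> \<Sum> \<mu>\<^sub>i\<^sup>2 - \<Sum> d\<^sub>i\<^sup>2 = off\<^sup>2\<close> for sorted \<open>\<mu>\<close> and \<open>d\<close>.\<close>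

lemma quat_zero_one_add_components [simp]:
  "qre 0 = 0" "qi 0 = 0" "qj 0 = 0" "qk 0 = 0"
  "qre 1 = 1" "qi 1 = 0" "qj 1 = 0" "qk 1 = 0"
  "qre (a + b) = qre a + qre b" "qi (a + b) = qi a + qi b"
  "qj (a + b) = qj a + qj b" "qk (a + b) = qk a + qk b"
  by (simp_all add: zero_quat_def one_quat_def plus_quat_def)

lemma quat_mult_components [simp]:
  "qre (a * b) = qre a * qre b - qi a * qi b - qj a * qj b - qk a * qk b"
  "qi (a * b) = qre a * qi b + qi a * qre b + qj a * qk b - qk a * qj b"
  "qj (a * b) = qre a * qj b - qi a * qk b + qj a * qre b + qk a * qi b"
  "qk (a * b) = qre a * qk b + qi a * qj b - qj a * qi b + qk a * qre b"
  by (simp_all add: times_quat_def)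

lemma qcnj_qreal_qscale_components [simp]:
  "qre (qcnj a) = qre a" "qi (qcnj a) = - qi a" "qj (qcnj a) = - qj a" "qk (qcnj a) = - qk a"
  "qre (qreal r) = r" "qi (qreal r) = 0" "qj (qreal r) = 0" "qk (qreal r) = 0"
  "qre (qscale r a) = r * qre a" "qi (qscale r a) = r * qi a"
  "qj (qscale r a) = r * qj a" "qk (qscale r a) = r * qk a"
  by (simp_all add: qcnj_def qreal_def qscale_def)

lemma quat_sum_components [simp]:
  "qre (sum f A) = (\<Sum>x\<in>A. qre (f x))" "qi (sum f A) = (\<Sum>x\<in>A. qi (f x))"
  "qj (sum f A) = (\<Sum>x\<in>A. qj (f x))" "qk (sum f A) = (\<Sum>x\<in>A. qk (f x))"
  by (induction A rule: infinite_finite_induct; simp)+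

lemma qcnj_0 [simp]: "qcnj 0 = 0" and qcnj_1 [simp]: "qcnj 1 = 1"
  by (rule quat_eqI; simp)+

lemma qcnj_qcnj [simp]: "qcnj (qcnj a) = a"
  by (rule quat_eqI) simp_all

lemma qcnj_mult: "qcnj (a * b) = qcnj b * qcnj a"
  by (rule quat_eqI) (simp_all add: algebra_simps)

lemma qcnj_sum: "qcnj (sum f A) = (\<Sum>x\<in>A. qcnj (f x))"
  by (rule quat_eqI) (simp_all add: sum_negf)

lemma qnorm_power2: "(qnorm a)\<^sup>2 = (qre a)\<^sup>2 + (qi a)\<^sup>2 + (qj a)\<^sup>2 + (qk a)\<^sup>2"
  by (simp add: qnorm_def)

lemma qnorm_power2_eq_qre_mult_qcnj: "(qnorm a)\<^sup>2 = qre (a * qcnj a)"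
  unfolding qnorm_power2 by (simp add: power2_eq_square)

lemma qnorm_nonneg [simp]: "0 \<le> qnorm a"
  by (simp add: qnorm_def)

lemma qnorm_qcnj [simp]: "qnorm (qcnj a) = qnorm a"
  by (simp add: qnorm_def)

lemma qnorm_qreal [simp]: "qnorm (qreal r) = \<bar>r\<bar>"
  by (simp add: qnorm_def)

lemma qnorm_eq_0_iff: "qnorm a = 0 \<longleftrightarrow> a = 0"
proof
  assume "qnorm a = 0"
  then have "(qre a)\<^sup>2 + (qi a)\<^sup>2 + (qj a)\<^sup>2 + (qk a)\<^sup>2 = 0"
    using qnorm_power2[of a] by simp
  then show "a = 0"
    by (intro quat_eqI) (simp_all add: sum_power2_eq_zero_iff add_nonneg_eq_0_iff)
qed (simp add: qnorm_def)

section \<open>Quaternion matrices and unitary similarity\<close>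

text \<open>Matrices are total functions, of which only the block below \<open>n\<close> is meaningful.\<close>

definition qmat_eq_on :: "nat \<Rightarrow> qmat \<Rightarrow> qmat \<Rightarrow> bool" where
  "qmat_eq_on n A B \<longleftrightarrow> (\<forall>i<n. \<forall>j<n. A i j = B i j)"

lemma qmat_eq_on_sym: "qmat_eq_on n A B \<Longrightarrow> qmat_eq_on n B A"
  by (simp add: qmat_eq_on_def)

lemma qmat_eq_on_trans [trans]: "qmat_eq_on n A B \<Longrightarrow> qmat_eq_on n B C \<Longrightarrow> qmat_eq_on n A C"
  by (simp add: qmat_eq_on_def)

lemma qmat_eq_on_qadj: "qmat_eq_on n A B \<Longrightarrow> qmat_eq_on n (qadj A) (qadj B)"
  by (simp add: qmat_eq_on_def qadj_def)

lemma qmult_assoc: "qmult n (qmult n A B) C = qmult n A (qmult n B C)"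
  unfolding qmult_def
  by (auto simp: sum_distrib_left sum_distrib_right mult.assoc intro!: ext sum.swap)

lemma qadj_qadj [simp]: "qadj (qadj A) = A"
  by (simp add: qadj_def)

lemma qadj_qmult: "qadj (qmult n A B) = qmult n (qadj B) (qadj A)"
  unfolding qmult_def qadj_def by (auto simp: qcnj_sum qcnj_mult intro!: ext)

lemma qmult_qident_left:
  assumes "i < n"
  shows "qmult n qident A i j = A i j"
proof -
  have "qident i m * A m j = (if i = m then A m j else 0)" for m
    by (simp add: qident_def)
  then show ?thesis
    using assms by (simp add: qmult_def)
qed

lemma qmult_qident_right:
  assumes "j < n"
  shows "qmult n A qident i j = A i j"
proof -
  have "A i m * qident m j = (if m = j then A i m else 0)" for m
    by (simp add: qident_def)
  then show ?thesis
    using assms by (simp add: qmult_def)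
qed

lemma qmult_cong_left: "qmat_eq_on n A A' \<Longrightarrow> i < n \<Longrightarrow> qmult n A B i j = qmult n A' B i j"
  unfolding qmult_def qmat_eq_on_def by simp

lemma qmult_cong_right: "qmat_eq_on n B B' \<Longrightarrow> j < n \<Longrightarrow> qmult n A B i j = qmult n A B' i j"
  unfolding qmult_def qmat_eq_on_def by simp

lemma qmult_cancel_left:
  assumes "qmat_eq_on n (qmult n A' A) qident"
  shows "qmat_eq_on n (qmult n A' (qmult n A B)) B"
  unfolding qmat_eq_on_def
proof (intro allI impI)
  fix i j assume "i < n" "j < n"
  have "qmult n A' (qmult n A B) i j = qmult n (qmult n A' A) B i j"
    by (simp add: qmult_assoc)
  also have "\<dots> = qmult n qident B i j"
    using assms \<open>i < n\<close> by (rule qmult_cong_left)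
  also have "\<dots> = B i j"
    using \<open>i < n\<close> by (rule qmult_qident_left)
  finally show "qmult n A' (qmult n A B) i j = B i j" .
qed

lemma qmult_cancel_right:
  assumes "qmat_eq_on n (qmult n A A') qident"
  shows "qmat_eq_on n (qmult n (qmult n B A) A') B"
  unfolding qmat_eq_on_def
proof (intro allI impI)
  fix i j assume "i < n" "j < n"
  have "qmult n (qmult n B A) A' i j = qmult n B (qmult n A A') i j"
    by (simp add: qmult_assoc)
  also have "\<dots> = qmult n B qident i j"
    using assms \<open>j < n\<close> by (rule qmult_cong_right)
  also have "\<dots> = B i j"
    using \<open>j < n\<close> by (rule qmult_qident_right)
  finally show "qmult n (qmult n B A) A' i j = B i j" .
qed

lemma qunitary_iff:
  "qunitary n U \<longleftrightarrow>
     qmat_eq_on n (qmult n (qadj U) U) qident \<and> qmat_eq_on n (qmult n U (qadj U)) qident"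
  by (auto simp: qunitary_def qmat_eq_on_def)

lemma qadj_qident [simp]: "qadj qident = qident"
  by (simp add: qadj_def qident_def fun_eq_iff)

lemma qunitary_qident: "qunitary n qident"
  by (simp add: qunitary_def qmult_qident_left)

lemma qunitary_qadj: "qunitary n U \<Longrightarrow> qunitary n (qadj U)"
  by (simp add: qunitary_def)

lemma qunitary_qmult:
  assumes A: "qunitary n A" and B: "qunitary n B"
  shows "qunitary n (qmult n A B)"
proof -
  have "qmat_eq_on n (qmult n (qadj B) (qmult n (qadj A) (qmult n A B))) (qmult n (qadj B) B)"
    using qmult_cancel_left A by (auto simp: qunitary_iff qmat_eq_on_def intro: qmult_cong_right)
  moreover have "qmat_eq_on n (qmult n A (qmult n B (qmult n (qadj B) (qadj A)))) (qmult n A (qadj A))"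
    using qmult_cancel_left B by (auto simp: qunitary_iff qmat_eq_on_def intro: qmult_cong_right)
  ultimately show ?thesis
    using A B by (auto simp: qunitary_iff qadj_qmult qmult_assoc intro: qmat_eq_on_trans)
qed

definition qunitarily_similar :: "nat \<Rightarrow> qmat \<Rightarrow> qmat \<Rightarrow> bool" where
  "qunitarily_similar n A B \<longleftrightarrow>
     (\<exists>G. qunitary n G \<and> qmat_eq_on n B (qmult n (qadj G) (qmult n A G)))"

lemma qmult_similar_cong:
  assumes "qmat_eq_on n A A'"
  shows "qmat_eq_on n (qmult n (qadj G) (qmult n A G)) (qmult n (qadj G) (qmult n A' G))"
proof -
  have AG: "qmat_eq_on n (qmult n A G) (qmult n A' G)"
    unfolding qmat_eq_on_def using qmult_cong_left[OF assms] by blast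
  show ?thesis
    unfolding qmat_eq_on_def using qmult_cong_right[OF AG] by blast
qed

lemma qunitarily_similar_refl: "qunitarily_similar n A A"
  unfolding qunitarily_similar_def
  by (intro exI[of _ qident]) (simp add: qunitary_qident qmat_eq_on_def qmult_qident_left qmult_qident_right)

lemma qunitarily_similar_sym:
  assumes "qunitarily_similar n A B"
  shows "qunitarily_similar n B A"
proof -
  obtain G where G: "qunitary n G" and B: "qmat_eq_on n B (qmult n (qadj G) (qmult n A G))"
    using assms by (auto simp: qunitarily_similar_def)
  have GG: "qmat_eq_on n (qmult n G (qadj G)) qident"
    using G by (simp add: qunitary_iff)
  have "qmat_eq_on n A (qmult n (qmult n A G) (qadj G))"
    using qmult_cancel_right[OF GG] by (rule qmat_eq_on_sym)
  also have "qmat_eq_on n \<dots> (qmult n G (qmult n (qadj G) (qmult n (qmult n A G) (qadj G))))"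
    using qmult_cancel_left[OF GG] by (rule qmat_eq_on_sym)
  also have "\<dots> = qmult n (qadj (qadj G)) (qmult n (qmult n (qadj G) (qmult n A G)) (qadj G))"
    by (simp add: qmult_assoc)
  also have "qmat_eq_on n \<dots> (qmult n (qadj (qadj G)) (qmult n B (qadj G)))"
    using qmult_similar_cong[OF qmat_eq_on_sym[OF B]] .
  finally show ?thesis
    using qunitary_qadj[OF G] unfolding qunitarily_similar_def by blast
qed

lemma qunitarily_similar_trans:
  assumes "qunitarily_similar n A B" and "qunitarily_similar n B C"
  shows "qunitarily_similar n A C"
proof -
  obtain G where G: "qunitary n G" and B: "qmat_eq_on n B (qmult n (qadj G) (qmult n A G))"
    using assms(1) by (auto simp: qunitarily_similar_def)
  obtain H where H: "qunitary n H" and C: "qmat_eq_on n C (qmult n (qadj H) (qmult n B H))"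
    using assms(2) by (auto simp: qunitarily_similar_def)
  have "qmat_eq_on n C (qmult n (qadj H) (qmult n (qmult n (qadj G) (qmult n A G)) H))"
    using C qmult_similar_cong[OF B] by (rule qmat_eq_on_trans)
  then have "qmat_eq_on n C (qmult n (qadj (qmult n G H)) (qmult n A (qmult n G H)))"
    by (simp add: qadj_qmult qmult_assoc)
  then show ?thesis
    using qunitary_qmult[OF G H] unfolding qunitarily_similar_def by blast
qed

lemma qhermitian_iff_qadj: "qhermitian n A \<longleftrightarrow> qmat_eq_on n (qadj A) A"
proof -
  have "A j i = qcnj (A i j) \<longleftrightarrow> qcnj (A j i) = A i j" for i j
    by (metis qcnj_qcnj)
  then show ?thesis
    by (simp add: qhermitian_def qmat_eq_on_def qadj_def)
qed

lemma qhermitian_similar: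
  assumes "qhermitian n A" and "qunitarily_similar n A B"
  shows "qhermitian n B"
proof -
  obtain G where B: "qmat_eq_on n B (qmult n (qadj G) (qmult n A G))"
    using assms(2) by (auto simp: qunitarily_similar_def)
  have "qmat_eq_on n (qadj B) (qmult n (qadj G) (qmult n (qadj A) G))"
    using qmat_eq_on_qadj[OF B] by (simp add: qadj_qmult qmult_assoc)
  also have "qmat_eq_on n \<dots> (qmult n (qadj G) (qmult n A G))"
    using assms(1) unfolding qhermitian_iff_qadj by (rule qmult_similar_cong)
  also have "qmat_eq_on n \<dots> B"
    using B by (rule qmat_eq_on_sym)
  finally show ?thesis
    by (simp add: qhermitian_iff_qadj)
qed

lemma qhermitian_diag:
  assumes "qhermitian n A" and "i < n"
  shows "A i i = qreal (qre (A i i))"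
proof -
  have "A i i = qcnj (A i i)"
    using assms unfolding qhermitian_def by blast
  from arg_cong[OF this, of qi] arg_cong[OF this, of qj] arg_cong[OF this, of qk]
  show ?thesis by (intro quat_eqI) simp_all
qed

definition qfrob_sq :: "nat \<Rightarrow> qmat \<Rightarrow> real" where
  "qfrob_sq n A = (\<Sum>i<n. \<Sum>j<n. (qnorm (A i j))\<^sup>2)"

definition qoff_sq :: "nat \<Rightarrow> qmat \<Rightarrow> real" where
  "qoff_sq n A = (\<Sum>i<n. \<Sum>j\<in>{..<n} - {i}. (qnorm (A i j))\<^sup>2)"

lemma qoff_sq_nonneg: "0 \<le> qoff_sq n A"
  unfolding qoff_sq_def by (intro sum_nonneg) simp

lemma qfrob_sq_cong: "qmat_eq_on n A B \<Longrightarrow> qfrob_sq n A = qfrob_sq n B"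
  unfolding qfrob_sq_def qmat_eq_on_def by simp

lemma qfrob_sq_qadj: "qfrob_sq n (qadj A) = qfrob_sq n A"
  unfolding qfrob_sq_def qadj_def qnorm_qcnj by (rule sum.swap)

lemma qfrob_sq_eq_sum_diag: "qfrob_sq n A = (\<Sum>i<n. qre (qmult n A (qadj A) i i))"
  unfolding qfrob_sq_def qmult_def qadj_def quat_sum_components qnorm_power2_eq_qre_mult_qcnj ..

lemma qfrob_sq_qmult_unitary:
  assumes "qunitary n G"
  shows "qfrob_sq n (qmult n A G) = qfrob_sq n A"
proof -
  have "qmat_eq_on n (qmult n G (qmult n (qadj G) (qadj A))) (qadj A)"
    using assms by (simp add: qunitary_iff qmult_cancel_left)
  then have "qmult n (qmult n A G) (qadj (qmult n A G)) i i = qmult n A (qadj A) i i" if "i < n" for i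
    using that by (simp add: qadj_qmult qmult_assoc qmult_cong_right[of n _ "qadj A"])
  then show ?thesis
    by (simp add: qfrob_sq_eq_sum_diag)
qed

lemma qfrob_sq_similar:
  assumes "qunitarily_similar n A B"
  shows "qfrob_sq n B = qfrob_sq n A"
proof -
  obtain G where G: "qunitary n G" and B: "qmat_eq_on n B (qmult n (qadj G) (qmult n A G))"
    using assms by (auto simp: qunitarily_similar_def)
  have "qfrob_sq n B = qfrob_sq n (qadj (qmult n (qadj G) (qmult n A G)))"
    using B by (simp add: qfrob_sq_cong qfrob_sq_qadj)
  also have "\<dots> = qfrob_sq n (qmult n (qadj (qmult n A G)) G)"
    by (simp add: qadj_qmult)
  also have "\<dots> = qfrob_sq n A"
    using G by (simp add: qfrob_sq_qmult_unitary qfrob_sq_qadj)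
  finally show ?thesis .
qed

lemma qfrob_sq_hermitian:
  assumes "qhermitian n A"
  shows "qfrob_sq n A = qoff_sq n A + (\<Sum>i<n. (qre (A i i))\<^sup>2)"
proof -
  have "(\<Sum>j<n. (qnorm (A i j))\<^sup>2) = (\<Sum>j\<in>{..<n} - {i}. (qnorm (A i j))\<^sup>2) + (qre (A i i))\<^sup>2"
    if "i < n" for i
  proof -
    have "(qnorm (A i i))\<^sup>2 = (qre (A i i))\<^sup>2"
      by (subst qhermitian_diag[OF assms that]) simp
    then show ?thesis
      using that sum.remove[of "{..<n}" i "\<lambda>j. (qnorm (A i j))\<^sup>2"] by simp
  qed
  then show ?thesis
    by (simp add: qfrob_sq_def qoff_sq_def sum.distrib)
qed

section \<open>Embedded Givens rotations\<close>

lemma sum_lessThan_single: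
  fixes f :: "nat \<Rightarrow> 'a::comm_monoid_add"
  assumes "i < n" and "\<And>m. m < n \<Longrightarrow> m \<noteq> i \<Longrightarrow> f m = 0"
  shows "(\<Sum>m<n. f m) = f i"
  using assms by (subst sum.mono_neutral_right[of "{..<n}" "{i}"]) auto

lemma sum_lessThan_pair:
  fixes f :: "nat \<Rightarrow> 'a::comm_monoid_add"
  assumes "k < l" "l < n" and "\<And>m. m < n \<Longrightarrow> m \<noteq> k \<Longrightarrow> m \<noteq> l \<Longrightarrow> f m = 0"
  shows "(\<Sum>m<n. f m) = f k + f l"
  using assms by (subst sum.mono_neutral_right[of "{..<n}" "{k, l}"]) auto

lemma qmult_2: "qmult 2 X Y p q = X p 0 * Y 0 q + X p 1 * Y 1 q"
  by (simp add: qmult_def numeral_2_eq_2 lessThan_Suc)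

definition qembed :: "nat \<Rightarrow> nat \<Rightarrow> qmat \<Rightarrow> qmat" where
  "qembed k l X = (\<lambda>i j. if (i = k \<or> i = l) \<and> (j = k \<or> j = l)
     then X (if i = k then 0 else 1) (if j = k then 0 else 1) else qident i j)"

definition qprincipal2 :: "nat \<Rightarrow> nat \<Rightarrow> qmat \<Rightarrow> qmat" where
  "qprincipal2 k l A = (\<lambda>i j. A (if i = 0 then k else l) (if j = 0 then k else l))"

lemma qadj_qembed: "qadj (qembed k l X) = qembed k l (qadj X)"
  by (auto simp: qembed_def qadj_def qident_def fun_eq_iff)

lemma qmult_qembed:
  assumes "k < l" "l < n" "i < n" "j < n"
  shows "qmult n (qembed k l X) (qembed k l Y) i j = qembed k l (qmult 2 X Y) i j"
proof -
  consider "(i = k \<or> i = l) \<and> (j = k \<or> j = l)" | "(i = k \<or> i = l) \<and> \<not> (j = k \<or> j = l)"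
    | "\<not> (i = k \<or> i = l)"
    by blast
  then show ?thesis
  proof cases
    case 1
    then show ?thesis
      unfolding qmult_def[of n] using assms
      by (subst sum_lessThan_pair[of k l]) (auto simp: qembed_def qident_def qmult_2)
  next
    case 2
    then show ?thesis
      unfolding qmult_def using assms
      by (subst sum_lessThan_single[of j]) (auto simp: qembed_def qident_def)
  next
    case 3
    then show ?thesis
      unfolding qmult_def using assms
      by (subst sum_lessThan_single[of i]) (auto simp: qembed_def qident_def)
  qed
qed

lemma qunitary_qembed:
  assumes "k < l" "l < n" and "qunitary 2 U"
  shows "qunitary n (qembed k l U)"
  unfolding qunitary_def
proof (intro allI impI conjI)
  fix i j assume "i < n" "j < n"
  have U: "qmult 2 (qadj U) U p q = qident p q" "qmult 2 U (qadj U) p q = qident p q"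
    if "p < 2" "q < 2" for p q
    using assms(3) that by (auto simp: qunitary_def)
  have "qmult n (qadj (qembed k l U)) (qembed k l U) i j = qembed k l (qmult 2 (qadj U) U) i j"
    using assms \<open>i < n\<close> \<open>j < n\<close> by (simp only: qadj_qembed qmult_qembed)
  then show "qmult n (qadj (qembed k l U)) (qembed k l U) i j = qident i j"
    using assms U by (auto simp: qembed_def qident_def)
  have "qmult n (qembed k l U) (qadj (qembed k l U)) i j = qembed k l (qmult 2 U (qadj U)) i j"
    using assms \<open>i < n\<close> \<open>j < n\<close> by (simp only: qadj_qembed qmult_qembed)
  then show "qmult n (qembed k l U) (qadj (qembed k l U)) i j = qident i j"
    using assms U by (auto simp: qembed_def qident_def)
qed

lemma qembed_similar_diag_outside:
  assumes "k < l" "l < n" "i < n" "i \<noteq> k" "i \<noteq> l"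
  shows "qmult n (qadj (qembed k l U)) (qmult n A (qembed k l U)) i i = A i i"
proof -
  have "qmult n A (qembed k l U) m i = A m i" for m
    unfolding qmult_def using assms
    by (subst sum_lessThan_single[of i]) (auto simp: qembed_def qident_def)
  then show ?thesis
    unfolding qmult_def[of n "qadj _"] using assms
    by (subst sum_lessThan_single[of i]) (auto simp: qembed_def qident_def qadj_def)
qed

lemma qembed_similar_principal:
  assumes "k < l" "l < n" "p = k \<or> p = l" "q = k \<or> q = l"
  defines "pos \<equiv> \<lambda>i::nat. if i = k then 0 else 1 :: nat"
  shows "qmult n (qadj (qembed k l U)) (qmult n A (qembed k l U)) p q =
    qmult 2 (qadj U) (qmult 2 (qprincipal2 k l A) U) (pos p) (pos q)"
proof -
  have AU: "qmult n A (qembed k l U) m q = A m k * U 0 (pos q) + A m l * U 1 (pos q)" for m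
    unfolding qmult_def using assms
    by (subst sum_lessThan_pair[of k l]) (auto simp: qembed_def qident_def)
  have "qmult n (qadj (qembed k l U)) (qmult n A (qembed k l U)) p q =
    qcnj (U 0 (pos p)) * qmult n A (qembed k l U) k q + qcnj (U 1 (pos p)) * qmult n A (qembed k l U) l q"
    unfolding qmult_def[of n "qadj _"] using assms
    by (subst sum_lessThan_pair[of k l]) (auto simp: qembed_def qident_def qadj_def)
  then show ?thesis
    using assms by (simp add: AU qmult_2 qadj_def qprincipal2_def)
qed

lemma fst_givens: "fst (givens Q k l lam1 lam2) = qembed k l (givens_U Q k l lam1 lam2)"
  unfolding givens_def givens_W_def Let_def dmult_def qembed_def
  by (auto simp: qmult_2 intro!: ext)

lemma vieta_two_roots:
  fixes a b s x y :: real
  assumes x: "(a - x) * (b - x) = s" and y: "(a - y) * (b - y) = s" and "x \<noteq> y"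
  shows "x + y = a + b" and "(a - x) * (a - y) = - s" and "x\<^sup>2 + y\<^sup>2 = a\<^sup>2 + b\<^sup>2 + 2 * s"
proof -
  have "(y - x) * (a + b - x - y) = 0"
    using x y by (simp add: algebra_simps)
  then show "x + y = a + b"
    using \<open>x \<noteq> y\<close> by simp
  then have y_eq: "y = a + b - x" by simp
  show "(a - x) * (a - y) = - s" and "x\<^sup>2 + y\<^sup>2 = a\<^sup>2 + b\<^sup>2 + 2 * s"
    unfolding x[symmetric] y_eq by (simp_all add: power2_eq_square algebra_simps)
qed

definition qblock2 :: "quat \<Rightarrow> real \<Rightarrow> real \<Rightarrow> real \<Rightarrow> real \<Rightarrow> qmat" where
  "qblock2 c u1 u2 v1 v2 = (\<lambda>i j.
     if i = 0 \<and> j = 0 then qscale u1 c else if i = 0 \<and> j = 1 then qscale u2 c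
     else if i = 1 \<and> j = 0 then qreal v1 else if i = 1 \<and> j = 1 then qreal v2 else 0)"

lemma givens_U_eq_qblock2:
  "givens_U Q k l lam1 lam2 =
    (let a = qre (fst Q k k); c = fst Q k l;
         r1 = sqrt ((a - lam1)\<^sup>2 + (qnorm c)\<^sup>2); r2 = sqrt ((a - lam2)\<^sup>2 + (qnorm c)\<^sup>2)
     in qblock2 c (- 1 / r1) (- 1 / r2) ((a - lam1) / r1) ((a - lam2) / r2))"
  unfolding givens_U_def qblock2_def Let_def ..

lemma qunitary_qblock2:
  assumes "u1\<^sup>2 * (qnorm c)\<^sup>2 + v1\<^sup>2 = 1" "u2\<^sup>2 * (qnorm c)\<^sup>2 + v2\<^sup>2 = 1"
    "u1 * u2 * (qnorm c)\<^sup>2 + v1 * v2 = 0" "(u1\<^sup>2 + u2\<^sup>2) * (qnorm c)\<^sup>2 = 1"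
    "u1 * v1 + u2 * v2 = 0" "v1\<^sup>2 + v2\<^sup>2 = 1"
  shows "qunitary 2 (qblock2 c u1 u2 v1 v2)"
proof -
  have orth: "u1 * (v1 * x) + u2 * (v2 * x) = 0" "- (u1 * (v1 * x)) = u2 * (v2 * x)" for x
    using arg_cong[OF assms(5), of "\<lambda>t. t * x"] by (simp_all add: algebra_simps)
  have less_2: "i < (2::nat) \<longleftrightarrow> i = 0 \<or> i = 1" for i
    by auto
  show ?thesis
    unfolding qunitary_def qmult_2 less_2 using assms[unfolded qnorm_power2]
    by (intro allI impI conjI; elim disjE; simp add: qblock2_def qadj_def qident_def;
        intro quat_eqI; simp add: algebra_simps power2_eq_square orth)
qed

lemma qunitary_givens_U:
  assumes c0: "fst Q k l \<noteq> 0"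
    and roots: "(qre (fst Q k k) - lam1) * (qre (fst Q k k) - lam2) = - (qnorm (fst Q k l))\<^sup>2"
  shows "qunitary 2 (givens_U Q k l lam1 lam2)"
proof -
  define s where "s = (qnorm (fst Q k l))\<^sup>2"
  define x1 where "x1 = qre (fst Q k k) - lam1"
  define x2 where "x2 = qre (fst Q k k) - lam2"
  define r1 where "r1 = sqrt (x1\<^sup>2 + s)"
  define r2 where "r2 = sqrt (x2\<^sup>2 + s)"
  have s: "s > 0"
    using c0 qnorm_eq_0_iff[of "fst Q k l"] by (simp add: s_def)
  have r: "r1 > 0" "r2 > 0" "r1\<^sup>2 = x1\<^sup>2 + s" "r2\<^sup>2 = x2\<^sup>2 + s"
    using s by (simp_all add: r1_def r2_def add_nonneg_pos)
  have x: "x1 * x2 = - s"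
    using roots by (simp add: x1_def x2_def s_def)
  have pos: "x1\<^sup>2 + s > 0" "x2\<^sup>2 + s > 0"
    using s by (simp_all add: add_nonneg_pos)
  have "s * (x2\<^sup>2 + s) + s * (x1\<^sup>2 + s) = (x1\<^sup>2 + s) * (x2\<^sup>2 + s)"
       "x1\<^sup>2 * (x2\<^sup>2 + s) + x2\<^sup>2 * (x1\<^sup>2 + s) = (x1\<^sup>2 + s) * (x2\<^sup>2 + s)"
       "x1 * (x2\<^sup>2 + s) + x2 * (x1\<^sup>2 + s) = 0"
    using x by algebra+
  then have "s / (x1\<^sup>2 + s) + s / (x2\<^sup>2 + s) = 1" "x1\<^sup>2 / (x1\<^sup>2 + s) + x2\<^sup>2 / (x2\<^sup>2 + s) = 1"
    and "x1 / (x1\<^sup>2 + s) + x2 / (x2\<^sup>2 + s) = 0"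
    using pos by (simp_all add: add_frac_eq)
  moreover have "x1\<^sup>2 / (x1\<^sup>2 + s) + s / (x1\<^sup>2 + s) = 1" "x2\<^sup>2 / (x2\<^sup>2 + s) + s / (x2\<^sup>2 + s) = 1"
    using pos by (simp_all add: add_divide_distrib[symmetric])
  moreover have "(- 1 / r1) * (- 1 / r2) * s + (x1 / r1) * (x2 / r2) = 0"
    using r x by (simp add: field_simps)
  moreover have "(- 1 / r1) * (x1 / r1) + (- 1 / r2) * (x2 / r2) = - (x1 / r1\<^sup>2 + x2 / r2\<^sup>2)"
    by (simp add: power2_eq_square)
  ultimately have "(- 1 / r1)\<^sup>2 * s + (x1 / r1)\<^sup>2 = 1" "(- 1 / r2)\<^sup>2 * s + (x2 / r2)\<^sup>2 = 1"
    "(- 1 / r1) * (- 1 / r2) * s + (x1 / r1) * (x2 / r2) = 0"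
    "((- 1 / r1)\<^sup>2 + (- 1 / r2)\<^sup>2) * s = 1"
    "(- 1 / r1) * (x1 / r1) + (- 1 / r2) * (x2 / r2) = 0"
    "(x1 / r1)\<^sup>2 + (x2 / r2)\<^sup>2 = 1"
    by (simp_all only: power_divide r(3,4)) (simp_all add: distrib_right add.commute)
  then show ?thesis
    unfolding givens_U_eq_qblock2 Let_def
    by (intro qunitary_qblock2) (simp_all add: s_def x1_def x2_def r1_def r2_def)
qed

lemma qre_hermitian2_form:
  "qre (qcnj (qscale u c) * (qreal a * qscale u c + c * qreal v)
      + qcnj (qreal v) * (qcnj c * qscale u c + qreal b * qreal v))
   = a * u\<^sup>2 * (qnorm c)\<^sup>2 + 2 * u * v * (qnorm c)\<^sup>2 + b * v\<^sup>2"
  unfolding qnorm_power2 by (simp add: power2_eq_square algebra_simps)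

text \<open>\<open>(-c, a - lam) / r\<close> is a unit eigenvector of \<open>[[a, c], [c*, b]]\<close> for the eigenvalue \<open>lam\<close>.\<close>

lemma givens_rayleigh_quotient:
  fixes a b lam s :: real
  assumes "(a - lam) * (b - lam) = s" and "s > 0"
  defines "r \<equiv> sqrt ((a - lam)\<^sup>2 + s)"
  shows "a * (- 1 / r)\<^sup>2 * s + 2 * (- 1 / r) * ((a - lam) / r) * s + b * ((a - lam) / r)\<^sup>2 = lam"
proof -
  have r: "r > 0" "r\<^sup>2 = (a - lam)\<^sup>2 + s"
    using assms(2) by (simp_all add: r_def add_nonneg_pos)
  have "a * (- 1 / r)\<^sup>2 * s + 2 * (- 1 / r) * ((a - lam) / r) * s + b * ((a - lam) / r)\<^sup>2
      = (a * s - 2 * (a - lam) * s + b * (a - lam)\<^sup>2) / r\<^sup>2"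
    using r(1) by (simp add: field_simps power2_eq_square)
  also have "a * s - 2 * (a - lam) * s + b * (a - lam)\<^sup>2 = lam * r\<^sup>2"
    unfolding r(2) assms(1)[symmetric] by (simp add: power2_eq_square algebra_simps)
  finally show ?thesis
    using r(1) by simp
qed

lemma givens_U_diag:
  assumes herm: "qhermitian n (fst Q)" and "k < n" "l < n" and c0: "fst Q k l \<noteq> 0"
    and r1: "(qre (fst Q k k) - lam1) * (qre (fst Q l l) - lam1) = (qnorm (fst Q k l))\<^sup>2"
    and r2: "(qre (fst Q k k) - lam2) * (qre (fst Q l l) - lam2) = (qnorm (fst Q k l))\<^sup>2"
  defines "U \<equiv> givens_U Q k l lam1 lam2" and "P \<equiv> qprincipal2 k l (fst Q)"
  shows "qre (qmult 2 (qadj U) (qmult 2 P U) 0 0) = lam1"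
    and "qre (qmult 2 (qadj U) (qmult 2 P U) 1 1) = lam2"
proof -
  define a where "a = qre (fst Q k k)"
  define b where "b = qre (fst Q l l)"
  define c where "c = fst Q k l"
  have s: "(qnorm c)\<^sup>2 > 0"
    using c0 qnorm_eq_0_iff[of c] by (simp add: c_def)
  have "fst Q l k = qcnj c"
    using herm \<open>k < n\<close> \<open>l < n\<close> unfolding qhermitian_def c_def by blast
  then have P: "P 0 0 = qreal a" "P 0 1 = c" "P 1 0 = qcnj c" "P 1 1 = qreal b"
    using qhermitian_diag[OF herm] \<open>k < n\<close> \<open>l < n\<close>
    by (simp_all add: P_def qprincipal2_def a_def b_def c_def)
  define r1 where "r1 = sqrt ((a - lam1)\<^sup>2 + (qnorm c)\<^sup>2)"
  define r2 where "r2 = sqrt ((a - lam2)\<^sup>2 + (qnorm c)\<^sup>2)"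
  have U: "U 0 0 = qscale (- 1 / r1) c" "U 1 0 = qreal ((a - lam1) / r1)"
    "U 0 1 = qscale (- 1 / r2) c" "U 1 1 = qreal ((a - lam2) / r2)"
    by (simp_all add: U_def givens_U_eq_qblock2 Let_def qblock2_def a_def c_def r1_def r2_def)
  show "qre (qmult 2 (qadj U) (qmult 2 P U) 0 0) = lam1"
    unfolding qmult_2 qadj_def U P qre_hermitian2_form r1_def
    using givens_rayleigh_quotient[OF r1[folded a_def b_def c_def] s] .
  show "qre (qmult 2 (qadj U) (qmult 2 P U) 1 1) = lam2"
    unfolding qmult_2 qadj_def U P qre_hermitian2_form r2_def
    using givens_rayleigh_quotient[OF r2[folded a_def b_def c_def] s] .
qed

lemma givens_rotation:
  fixes Q :: dqmat and k l :: nat and lam1 lam2 :: real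
  defines "A \<equiv> fst Q" and "G \<equiv> fst (givens Q k l lam1 lam2)"
  assumes herm: "qhermitian n A" and kl: "k < l" "l < n" and c0: "A k l \<noteq> 0"
    and "lam1 \<noteq> lam2"
    and r1: "(qre (A k k) - lam1) * (qre (A l l) - lam1) = (qnorm (A k l))\<^sup>2"
    and r2: "(qre (A k k) - lam2) * (qre (A l l) - lam2) = (qnorm (A k l))\<^sup>2"
  shows "qunitary n G"
    and "qoff_sq n (qmult n (qadj G) (qmult n A G)) = qoff_sq n A - 2 * (qnorm (A k l))\<^sup>2"
proof -
  note vieta = vieta_two_roots[OF r1 r2 \<open>lam1 \<noteq> lam2\<close>]
  show unitary: "qunitary n G"
    unfolding G_def fst_givens
    using kl qunitary_givens_U[of Q k l lam1 lam2] c0 vieta(2)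
    by (intro qunitary_qembed) (simp_all add: A_def)
  define B where "B = qmult n (qadj G) (qmult n A G)"
  have sim: "qunitarily_similar n A B"
    unfolding qunitarily_similar_def qmat_eq_on_def B_def using unitary
    by (intro exI[of _ G]) simp
  have diag_kl: "qre (B k k) = lam1" "qre (B l l) = lam2"
    using givens_U_diag[of n Q k l lam1 lam2] herm kl c0 r1 r2
      qembed_similar_principal[OF kl, of k k] qembed_similar_principal[OF kl, of l l]
    by (simp_all add: B_def G_def fst_givens A_def)
  have diag_other: "B i i = A i i" if "i < n" "i \<noteq> k" "i \<noteq> l" for i
    using qembed_similar_diag_outside[OF kl that] by (simp add: B_def G_def fst_givens)
  have "(\<Sum>i<n. (qre (B i i))\<^sup>2) - (\<Sum>i<n. (qre (A i i))\<^sup>2)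
      = (\<Sum>i<n. (qre (B i i))\<^sup>2 - (qre (A i i))\<^sup>2)"
    by (simp add: sum_subtractf)
  also have "\<dots> = ((qre (B k k))\<^sup>2 - (qre (A k k))\<^sup>2) + ((qre (B l l))\<^sup>2 - (qre (A l l))\<^sup>2)"
    using kl diag_other by (intro sum_lessThan_pair) auto
  also have "\<dots> = 2 * (qnorm (A k l))\<^sup>2"
    using diag_kl vieta(3) by simp
  finally show "qoff_sq n B = qoff_sq n A - 2 * (qnorm (A k l))\<^sup>2"
    using qfrob_sq_hermitian[OF herm] qfrob_sq_hermitian[OF qhermitian_similar[OF herm sim]]
      qfrob_sq_similar[OF sim]
    by linarith
qed

lemma jacobi_step_similar:
  assumes step: "jacobi_step n Q Q'" and herm: "qhermitian n (fst Q)" and pos: "off_max n Q > 0"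
  shows "qunitarily_similar n (fst Q) (fst Q')"
    and "qoff_sq n (fst Q') = qoff_sq n (fst Q) - 2 * (off_max n Q)\<^sup>2"
proof -
  obtain k l lam1 lam2 where kl: "k < l" "l < n" and max: "qnorm (fst Q k l) = off_max n Q"
    and "lam1 \<noteq> lam2"
    and r1: "(qre (fst Q k k) - lam1) * (qre (fst Q l l) - lam1) = (qnorm (fst Q k l))\<^sup>2"
    and r2: "(qre (fst Q k k) - lam2) * (qre (fst Q l l) - lam2) = (qnorm (fst Q k l))\<^sup>2"
    and Q': "Q' = dmult n (dadj (givens Q k l lam1 lam2)) (dmult n Q (givens Q k l lam1 lam2))"
    using step unfolding jacobi_step_def by (elim exE conjE) (rule that)
  define G where "G = fst (givens Q k l lam1 lam2)"
  have c0: "fst Q k l \<noteq> 0"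
  proof
    assume "fst Q k l = 0"
    then have "off_max n Q = 0"
      using max by (simp add: qnorm_def)
    with pos show False by simp
  qed
  have Q'_G: "fst Q' = qmult n (qadj G) (qmult n (fst Q) G)"
    unfolding Q' G_def by (simp add: dmult_def dadj_def)
  note rotation = givens_rotation[OF herm kl c0 \<open>lam1 \<noteq> lam2\<close> r1 r2, folded G_def]
  show "qunitarily_similar n (fst Q) (fst Q')"
    unfolding qunitarily_similar_def qmat_eq_on_def using rotation(1) Q'_G
    by (intro exI[of _ G]) simp
  show "qoff_sq n (fst Q') = qoff_sq n (fst Q) - 2 * (off_max n Q)\<^sup>2"
    using rotation(2) Q'_G max by simp
qed

lemma off_max_ge:
  assumes "i < j" "j < n"
  shows "qnorm (fst Q i j) \<le> off_max n Q"
proof -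
  have "{qnorm (fst Q i j) | i j. i < j \<and> j < n} \<subseteq> (\<lambda>(i, j). qnorm (fst Q i j)) ` ({..<n} \<times> {..<n})"
    by auto
  then have "finite {qnorm (fst Q i j) | i j. i < j \<and> j < n}"
    by (rule finite_subset) simp
  then show ?thesis
    unfolding off_max_def using assms by (intro Max_ge) auto
qed

lemma qoff_sq_less_of_off_max_less:
  assumes herm: "qhermitian n (fst Q)" and "2 \<le> n" and less: "off_max n Q < eps"
  shows "qoff_sq n (fst Q) < real (n * (n - 1)) * eps\<^sup>2"
proof -
  have entry: "(qnorm (fst Q i j))\<^sup>2 < eps\<^sup>2" if "i < n" "j < n" "i \<noteq> j" for i j
  proof -
    have "qnorm (fst Q i j) < eps"
    proof (cases "i < j")
      case True
      then show ?thesis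
        using off_max_ge[of i j n Q] that less by simp
    next
      case False
      then have "qnorm (fst Q j i) < eps"
        using off_max_ge[of j i n Q] that less by simp
      moreover have "fst Q i j = qcnj (fst Q j i)"
        using herm that unfolding qhermitian_def by blast
      ultimately show ?thesis by simp
    qed
    then show ?thesis
      by (simp add: power_strict_mono)
  qed
  have row: "(\<Sum>j\<in>{..<n} - {i}. (qnorm (fst Q i j))\<^sup>2) < (\<Sum>j\<in>{..<n} - {i}. eps\<^sup>2)"
    if "i < n" for i
  proof (rule sum_strict_mono)
    have "(if i = 0 then 1 else 0) \<in> {..<n} - {i}"
      using \<open>2 \<le> n\<close> by auto
    then show "{..<n} - {i} \<noteq> {}"
      by blast
  qed (use entry that in auto)
  have "qoff_sq n (fst Q) < (\<Sum>i<n. \<Sum>j\<in>{..<n} - {i}. eps\<^sup>2)"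
    unfolding qoff_sq_def by (rule sum_strict_mono) (use row \<open>2 \<le> n\<close> in \<open>auto simp: lessThan_empty_iff\<close>)
  also have "\<dots> = real (n * (n - 1)) * eps\<^sup>2"
    using \<open>2 \<le> n\<close> by (simp add: card_Diff_singleton of_nat_diff)
  finally show ?thesis .
qed

section \<open>Majorization by a doubly stochastic matrix\<close>

lemma sum_mult_weights_le_sum_prefix:
  fixes d w :: "nat \<Rightarrow> real"
  assumes dec: "nonincreasing_on n d" and w: "\<And>i. i < n \<Longrightarrow> 0 \<le> w i \<and> w i \<le> 1"
    and w_sum: "(\<Sum>i<n. w i) = real k" and "k \<le> n"
  shows "(\<Sum>i<n. d i * w i) \<le> (\<Sum>i<k. d i)"
proof (cases "k = 0")
  case True
  then show ?thesis
    using w w_sum sum_nonneg_eq_0_iff[of "{..<n}" w] by auto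
next
  case False
  define t where "t = d (k - 1)"
  have "(\<Sum>i<n. (d i - t) * w i) \<le> (\<Sum>i<n. if i < k then d i - t else 0)"
  proof (rule sum_mono)
    fix i assume "i \<in> {..<n}"
    then have i: "i < n" "0 \<le> w i" "w i \<le> 1"
      using w by auto
    show "(d i - t) * w i \<le> (if i < k then d i - t else 0)"
    proof (cases "i < k")
      case True
      then have "i \<le> k - 1" "k - 1 < n"
        using \<open>k \<le> n\<close> by auto
      then have "t \<le> d i"
        using dec unfolding t_def nonincreasing_on_def by blast
      then show ?thesis
        using True i by (simp add: mult_left_le)
    next
      case False
      then have "d i \<le> t"
        using dec i \<open>k \<noteq> 0\<close> unfolding t_def nonincreasing_on_def by auto
      then show ?thesis
        using False i by (simp add: mult_nonpos_nonneg)
    qed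
  qed
  also have "\<dots> = (\<Sum>i<k. d i - t)"
    using \<open>k \<le> n\<close> by (simp add: sum.If_cases lessThan_def Collect_conj_eq[symmetric])
      (intro sum.cong; auto)
  finally show ?thesis
    using w_sum by (simp add: algebra_simps sum_subtractf sum.distrib sum_distrib_left[symmetric])
qed

lemma sum_mult_nonneg_of_prefix_sums_nonneg:
  fixes mu e :: "nat \<Rightarrow> real"
  assumes dec: "nonincreasing_on n mu" and prefix: "\<And>k. k \<le> n \<Longrightarrow> 0 \<le> (\<Sum>j<k. e j)"
    and total: "(\<Sum>j<n. e j) = 0"
  shows "0 \<le> (\<Sum>j<n. mu j * e j)"
proof (cases n)
  case (Suc n')
  have "mu m * (\<Sum>j<Suc m. e j) \<le> (\<Sum>j<Suc m. mu j * e j)" if "m < n" for m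
    using that
  proof (induction m)
    case (Suc m)
    have "mu (Suc m) \<le> mu m"
      using dec Suc.prems unfolding nonincreasing_on_def by auto
    moreover have "0 \<le> (\<Sum>j<Suc m. e j)"
      using prefix[of "Suc m"] Suc.prems by simp
    ultimately have "mu (Suc m) * (\<Sum>j<Suc m. e j) \<le> mu m * (\<Sum>j<Suc m. e j)"
      by (simp add: mult_right_mono)
    with Suc show ?case
      by (simp add: algebra_simps)
  qed simp
  from this[of n'] Suc total show ?thesis
    by simp
qed simp

lemma doubly_stochastic_sum_power2_diff_le:
  fixes P :: "nat \<Rightarrow> nat \<Rightarrow> real" and mu d :: "nat \<Rightarrow> real"
  assumes nonneg: "\<And>i j. i < n \<Longrightarrow> j < n \<Longrightarrow> 0 \<le> P i j"
    and rows: "\<And>i. i < n \<Longrightarrow> (\<Sum>j<n. P i j) = 1"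
    and cols: "\<And>j. j < n \<Longrightarrow> (\<Sum>i<n. P i j) = 1"
    and mu_dec: "nonincreasing_on n mu" and d_dec: "nonincreasing_on n d"
    and d_eq: "\<And>i. i < n \<Longrightarrow> d i = (\<Sum>j<n. P i j * mu j)"
  shows "(\<Sum>i<n. (mu i - d i)\<^sup>2) \<le> (\<Sum>i<n. (mu i)\<^sup>2) - (\<Sum>i<n. (d i)\<^sup>2)"
proof -
  \<comment> \<open>\<open>\<Sum> d\<^sup>2 = \<Sum> \<mu>\<^sub>j y\<^sub>j\<close> with \<open>y = P\<^sup>T d\<close>; the prefix sums of the sorted \<open>d\<close> dominate those
    of \<open>y\<close>, so Abel summation against the sorted \<open>\<mu>\<close> gives \<open>\<Sum> \<mu>\<^sub>j y\<^sub>j \<le> \<Sum> \<mu>\<^sub>j d\<^sub>j\<close>.\<close>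
  define y where "y j = (\<Sum>i<n. P i j * d i)" for j
  have d_sq: "(\<Sum>i<n. (d i)\<^sup>2) = (\<Sum>j<n. mu j * y j)"
  proof -
    have "(\<Sum>i<n. (d i)\<^sup>2) = (\<Sum>i<n. \<Sum>j<n. mu j * (P i j * d i))"
      using d_eq by (simp add: power2_eq_square sum_distrib_left sum_distrib_right algebra_simps)
    also have "\<dots> = (\<Sum>j<n. mu j * y j)"
      by (subst sum.swap) (simp add: y_def sum_distrib_left)
    finally show ?thesis .
  qed
  have prefix: "0 \<le> (\<Sum>j<k. d j - y j)" if "k \<le> n" for k
  proof -
    define w where "w i = (\<Sum>j<k. P i j)" for i
    have "0 \<le> w i \<and> w i \<le> 1" if "i < n" for i
    proof
      show "0 \<le> w i"
        unfolding w_def using nonneg that \<open>k \<le> n\<close> by (intro sum_nonneg) auto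
      have "w i \<le> (\<Sum>j<n. P i j)"
        unfolding w_def using nonneg that \<open>k \<le> n\<close> by (intro sum_mono2) auto
      then show "w i \<le> 1"
        using rows that by simp
    qed
    moreover have "(\<Sum>i<n. w i) = real k"
      unfolding w_def using cols \<open>k \<le> n\<close> by (subst sum.swap) simp
    ultimately have "(\<Sum>i<n. d i * w i) \<le> (\<Sum>i<k. d i)"
      using sum_mult_weights_le_sum_prefix[OF d_dec] \<open>k \<le> n\<close> by blast
    moreover have "(\<Sum>j<k. y j) = (\<Sum>i<n. d i * w i)"
      unfolding y_def w_def by (subst sum.swap) (simp add: sum_distrib_left algebra_simps)
    ultimately show ?thesis
      by (simp add: sum_subtractf)
  qed
  have "(\<Sum>j<n. y j) = (\<Sum>i<n. d i * (\<Sum>j<n. P i j))"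
    unfolding y_def by (subst sum.swap) (simp add: sum_distrib_left algebra_simps)
  then have total: "(\<Sum>j<n. d j - y j) = 0"
    using rows by (simp add: sum_subtractf)
  have "(\<Sum>i<n. (d i)\<^sup>2) \<le> (\<Sum>j<n. mu j * d j)"
    using sum_mult_nonneg_of_prefix_sums_nonneg[OF mu_dec prefix total]
    unfolding d_sq by (simp add: algebra_simps sum_subtractf)
  moreover have "(\<Sum>i<n. (mu i - d i)\<^sup>2)
      = (\<Sum>i<n. (mu i)\<^sup>2) - 2 * (\<Sum>j<n. mu j * d j) + (\<Sum>i<n. (d i)\<^sup>2)"
    by (simp add: power2_diff sum.distrib sum_subtractf sum_distrib_left algebra_simps)
  ultimately show ?thesis
    by linarith
qed

definition qdiag :: "(nat \<Rightarrow> real) \<Rightarrow> qmat" where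
  "qdiag mu = (\<lambda>i j. if i = j then qreal (mu i) else 0)"

lemma qhermitian_qdiag: "qhermitian n (qdiag mu)"
proof -
  have "qcnj (qreal r) = qreal r" for r
    by (rule quat_eqI) simp_all
  then show ?thesis
    by (simp add: qhermitian_def qdiag_def)
qed

lemma qeigenvalue_list_similar:
  assumes "qeigenvalue_list n A mu"
  shows "qunitarily_similar n A (qdiag mu)"
proof -
  obtain U where "qunitary n U"
    and "\<forall>i<n. \<forall>j<n. qmult n (qadj U) (qmult n A U) i j = (if i = j then qreal (mu i) else 0)"
    using assms unfolding qeigenvalue_list_def by blast
  then show ?thesis
    unfolding qunitarily_similar_def qmat_eq_on_def qdiag_def by (intro exI[of _ U]) simp
qed

lemma qfrob_sq_qdiag: "qfrob_sq n (qdiag mu) = (\<Sum>i<n. (mu i)\<^sup>2)"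
proof -
  have "(qnorm (qdiag mu i j))\<^sup>2 = (if i = j then (mu i)\<^sup>2 else 0)" for i j
    by (simp add: qdiag_def qnorm_def)
  then show ?thesis
    by (simp add: qfrob_sq_def)
qed

lemma qdiag_similar_diag:
  assumes B: "qmat_eq_on n B (qmult n (qadj V) (qmult n (qdiag mu) V))" and "i < n"
  shows "qre (B i i) = (\<Sum>j<n. (qnorm (V j i))\<^sup>2 * mu j)"
proof -
  have inner: "qmult n (qdiag mu) V m i = qreal (mu m) * V m i" if "m < n" for m
    unfolding qmult_def using that by (subst sum_lessThan_single[of m]) (auto simp: qdiag_def)
  have "B i i = (\<Sum>m<n. qcnj (V m i) * qmult n (qdiag mu) V m i)"
    using B \<open>i < n\<close> unfolding qmat_eq_on_def qmult_def[of n "qadj V"] by (simp add: qadj_def)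
  also have "\<dots> = (\<Sum>m<n. qcnj (V m i) * (qreal (mu m) * V m i))"
    by (rule sum.cong) (simp_all add: inner)
  finally show ?thesis
    unfolding qnorm_power2 by (simp add: power2_eq_square algebra_simps)
qed

lemma qunitary_row_norms:
  assumes "qunitary n V" and "i < n"
  shows "(\<Sum>j<n. (qnorm (V i j))\<^sup>2) = 1"
proof -
  have "qre (qmult n V (qadj V) i i) = 1"
    using assms by (simp add: qunitary_def qident_def)
  then show ?thesis
    by (simp add: qmult_def qadj_def qnorm_power2_eq_qre_mult_qcnj)
qed

lemma qunitary_col_norms:
  assumes "qunitary n V" and "j < n"
  shows "(\<Sum>i<n. (qnorm (V i j))\<^sup>2) = 1"
proof -
  have "qre (qmult n (qadj V) V j j) = 1"
    using assms by (simp add: qunitary_def qident_def)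
  then show ?thesis
    unfolding qnorm_power2 by (simp add: qmult_def qadj_def power2_eq_square algebra_simps)
qed

lemma mset_map_upt_eqE:
  assumes "mset (map d [0..<n]) = mset (map e [0..<n])"
  obtains f where "bij_betw f {..<n} {..<n}" and "\<And>i. i < n \<Longrightarrow> d i = e (f i)"
proof -
  obtain f where f: "bij_betw f {..<n} {..<n}"
    and nth: "\<forall>i<n. map d [0..<n] ! i = map e [0..<n] ! f i"
    using permutation_Ex_bij[OF assms] by auto
  have "d i = e (f i)" if "i < n" for i
    using nth bij_betw_apply[OF f] that by auto
  with f show thesis
    using that by blast
qed

lemma sum_power2_eigenvalue_diag_diff_le_qoff_sq:
  assumes eig: "qeigenvalue_list n A mu" and mu_dec: "nonincreasing_on n mu"
    and sim: "qunitarily_similar n A B"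
    and d: "mset (map d [0..<n]) = mset (map (\<lambda>i. qre (B i i)) [0..<n])"
    and d_dec: "nonincreasing_on n d"
  shows "(\<Sum>i<n. (mu i - d i)\<^sup>2) \<le> qoff_sq n B"
proof -
  have sim_diag: "qunitarily_similar n (qdiag mu) B"
    using qeigenvalue_list_similar[OF eig] sim by (blast intro: qunitarily_similar_sym qunitarily_similar_trans)
  then obtain V where V: "qunitary n V" and B: "qmat_eq_on n B (qmult n (qadj V) (qmult n (qdiag mu) V))"
    unfolding qunitarily_similar_def by blast
  obtain f where f: "bij_betw f {..<n} {..<n}" and d_f: "\<And>i. i < n \<Longrightarrow> d i = qre (B (f i) (f i))"
    using d by (rule mset_map_upt_eqE) blast
  have f_less: "f i < n" if "i < n" for i
    using bij_betw_apply[OF f] that by auto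
  define P where "P i j = (qnorm (V j (f i)))\<^sup>2" for i j
  have "(\<Sum>i<n. (mu i - d i)\<^sup>2) \<le> (\<Sum>i<n. (mu i)\<^sup>2) - (\<Sum>i<n. (d i)\<^sup>2)"
  proof (rule doubly_stochastic_sum_power2_diff_le[OF _ _ _ mu_dec d_dec])
    show "0 \<le> P i j" for i j
      by (simp add: P_def)
    show "(\<Sum>j<n. P i j) = 1" if "i < n" for i
      using qunitary_col_norms[OF V f_less[OF that]] by (simp add: P_def)
    show "(\<Sum>i<n. P i j) = 1" if "j < n" for j
      using qunitary_row_norms[OF V that] sum.reindex_bij_betw[OF f, of "\<lambda>i. (qnorm (V j i))\<^sup>2"]
      by (simp add: P_def)
    show "d i = (\<Sum>j<n. P i j * mu j)" if "i < n" for i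
      using d_f[OF that] qdiag_similar_diag[OF B f_less[OF that]] by (simp add: P_def)
  qed
  moreover have "(\<Sum>i<n. (d i)\<^sup>2) = (\<Sum>i<n. (qre (B i i))\<^sup>2)"
    using d_f sum.reindex_bij_betw[OF f, of "\<lambda>i. (qre (B i i))\<^sup>2"] by simp
  moreover have "(\<Sum>i<n. (mu i)\<^sup>2) = qfrob_sq n B"
    using qfrob_sq_similar[OF sim_diag] qfrob_sq_qdiag by simp
  ultimately show ?thesis
    using qfrob_sq_hermitian[OF qhermitian_similar[OF qhermitian_qdiag sim_diag]] by linarith
qed

lemma algorithm1_run_invariant:
  assumes run: "algorithm1_run n eps Q Qs" and herm: "qhermitian n (fst Q)" and "0 < eps"
    and running: "\<forall>s<t. eps \<le> off_max n (Qs s)"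
  shows "qunitarily_similar n (fst Q) (fst (Qs t))"
    and "qoff_sq n (fst (Qs t)) \<le> qoff_sq n (fst Q) - 2 * real t * eps\<^sup>2"
proof -
  have "qunitarily_similar n (fst Q) (fst (Qs t)) \<and>
      qoff_sq n (fst (Qs t)) \<le> qoff_sq n (fst Q) - 2 * real t * eps\<^sup>2"
    using running
  proof (induction t)
    case 0
    then show ?case
      using run by (simp add: algorithm1_run_def qunitarily_similar_refl)
  next
    case (Suc t)
    then have sim: "qunitarily_similar n (fst Q) (fst (Qs t))"
      and bound: "qoff_sq n (fst (Qs t)) \<le> qoff_sq n (fst Q) - 2 * real t * eps\<^sup>2"
      and ge: "eps \<le> off_max n (Qs t)"
      by auto
    have "jacobi_step n (Qs t) (Qs (Suc t))"
      using run ge by (simp add: algorithm1_run_def)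
    note step = jacobi_step_similar[OF this qhermitian_similar[OF herm sim]]
    have "0 < off_max n (Qs t)"
      using ge \<open>0 < eps\<close> by linarith
    moreover have "eps\<^sup>2 \<le> (off_max n (Qs t))\<^sup>2"
      using ge \<open>0 < eps\<close> by (simp add: power_mono)
    ultimately have "qoff_sq n (fst (Qs (Suc t))) \<le> qoff_sq n (fst Q) - 2 * real t * eps\<^sup>2 - 2 * eps\<^sup>2"
      using step(2) bound by linarith
    then show ?case
      using qunitarily_similar_trans[OF sim step(1)] \<open>0 < off_max n (Qs t)\<close>
      by (simp add: algebra_simps)
  qed
  then show "qunitarily_similar n (fst Q) (fst (Qs t))"
    and "qoff_sq n (fst (Qs t)) \<le> qoff_sq n (fst Q) - 2 * real t * eps\<^sup>2"
    by auto
qed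

lemma algorithm1_run_terminates:
  assumes run: "algorithm1_run n eps Q Qs" and herm: "qhermitian n (fst Q)" and "0 < eps"
  obtains T where "T \<le> nat \<lfloor>qoff_sq n (fst Q) / (2 * eps\<^sup>2)\<rfloor> + 1"
    and "\<forall>t<T. eps \<le> off_max n (Qs t)" and "off_max n (Qs T) < eps"
proof -
  define T0 where "T0 = nat \<lfloor>qoff_sq n (fst Q) / (2 * eps\<^sup>2)\<rfloor> + 1"
  have "qoff_sq n (fst Q) / (2 * eps\<^sup>2) < real T0"
    using qoff_sq_nonneg[of n "fst Q"] unfolding T0_def by linarith
  then have budget: "qoff_sq n (fst Q) < 2 * real T0 * eps\<^sup>2"
    using \<open>0 < eps\<close> by (simp add: divide_less_eq mult.commute mult.left_commute)
  have "\<exists>t. off_max n (Qs t) < eps \<and> t \<le> T0"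
  proof (rule ccontr)
    assume "\<not> ?thesis"
    then have "\<forall>s<T0. eps \<le> off_max n (Qs s)"
      by (meson less_imp_le not_less)
    then have "qoff_sq n (fst (Qs T0)) \<le> qoff_sq n (fst Q) - 2 * real T0 * eps\<^sup>2"
      by (rule algorithm1_run_invariant(2)[OF run herm \<open>0 < eps\<close>])
    then show False
      using budget qoff_sq_nonneg[of n "fst (Qs T0)"] by linarith
  qed
  then obtain t where t: "off_max n (Qs t) < eps" "t \<le> T0"
    by blast
  then obtain T where T: "off_max n (Qs T) < eps" "\<forall>s<T. \<not> off_max n (Qs s) < eps"
    using exists_least_iff[of "\<lambda>t. off_max n (Qs t) < eps"] by blast
  then have "T \<le> T0"
    using t by (meson le_trans not_le)
  with T show thesis
    using that unfolding T0_def by (meson not_le)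
qed

lemma abs_less_of_sum_power2_less:
  fixes x :: "nat \<Rightarrow> real"
  assumes sum: "(\<Sum>j<n. (x j)\<^sup>2) < C * e\<^sup>2" and "0 < e" and "i < n"
  shows "\<bar>x i\<bar> < sqrt C * e"
proof -
  have "(x i)\<^sup>2 \<le> (\<Sum>j<n. (x j)\<^sup>2)"
    using \<open>i < n\<close> by (intro member_le_sum) auto
  then have "\<bar>x i\<bar>\<^sup>2 < C * e\<^sup>2"
    using sum by simp
  then have "sqrt (\<bar>x i\<bar>\<^sup>2) < sqrt (C * e\<^sup>2)"
    by (rule real_sqrt_less_mono)
  then show ?thesis
    using \<open>0 < e\<close> by (simp add: real_sqrt_mult)
qed

theorem theorem3p6:
  fixes n :: nat and Q :: dqmat and eps :: real
  assumes "n \<ge> 2" and "dhermitian n Q" and "eps > 0"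
  shows "\<exists>T0::nat. T0 > 0 \<and>
    (\<forall>Qs. algorithm1_run n eps Q Qs \<longrightarrow>
       (\<exists>T \<le> T0. (\<forall>t<T. off_max n (Qs t) \<ge> eps) \<and> off_max n (Qs T) < eps \<and>
          (\<forall>mu d. qeigenvalue_list n (fst Q) mu \<and> nonincreasing_on n mu \<and>
                  mset (map d [0..<n]) = mset (map (\<lambda>i. qre (fst (Qs T) i i)) [0..<n]) \<and>
                  nonincreasing_on n d
             \<longrightarrow> (\<forall>i<n. \<bar>mu i - d i\<bar> < sqrt (real (n * (n - 1))) * eps))))"
proof -
  have herm: "qhermitian n (fst Q)"
    using assms(2) by (simp add: dhermitian_def)
  define T0 where "T0 = nat \<lfloor>qoff_sq n (fst Q) / (2 * eps\<^sup>2)\<rfloor> + 1"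
  have "\<exists>T \<le> T0. (\<forall>t<T. off_max n (Qs t) \<ge> eps) \<and> off_max n (Qs T) < eps \<and>
          (\<forall>mu d. qeigenvalue_list n (fst Q) mu \<and> nonincreasing_on n mu \<and>
                  mset (map d [0..<n]) = mset (map (\<lambda>i. qre (fst (Qs T) i i)) [0..<n]) \<and>
                  nonincreasing_on n d
             \<longrightarrow> (\<forall>i<n. \<bar>mu i - d i\<bar> < sqrt (real (n * (n - 1))) * eps))"
    if run: "algorithm1_run n eps Q Qs" for Qs
  proof -
    obtain T where "T \<le> T0" and running: "\<forall>t<T. eps \<le> off_max n (Qs t)"
      and stop: "off_max n (Qs T) < eps"
      using algorithm1_run_terminates[OF run herm assms(3)] unfolding T0_def by blast
    have sim: "qunitarily_similar n (fst Q) (fst (Qs T))"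
      using algorithm1_run_invariant(1)[OF run herm assms(3) running] .
    have off: "qoff_sq n (fst (Qs T)) < real (n * (n - 1)) * eps\<^sup>2"
      using qoff_sq_less_of_off_max_less[OF qhermitian_similar[OF herm sim] assms(1) stop] .
    have "\<bar>mu i - d i\<bar> < sqrt (real (n * (n - 1))) * eps"
      if "qeigenvalue_list n (fst Q) mu" "nonincreasing_on n mu"
        "mset (map d [0..<n]) = mset (map (\<lambda>i. qre (fst (Qs T) i i)) [0..<n])"
        "nonincreasing_on n d" "i < n" for mu d i
      using sum_power2_eigenvalue_diag_diff_le_qoff_sq[OF that(1,2) sim that(3,4)] off
      by (intro abs_less_of_sum_power2_less[OF _ assms(3) that(5)]) linarith
    then show ?thesis
      using \<open>T \<le> T0\<close> running stop by (intro exI[of _ T]) auto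
  qed
  then show ?thesis
    by (intro exI[of _ T0]) (simp add: T0_def)
qed

end
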